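(* Consider the planar Maxwell-ring potential described in the context with $\mu=0$ and $\alpha\ge 1$. Then the origin $u_0=0$ is a critical point of $V$. Moreover, for $n\ge3$, $D^2V(0)=\lambda I$ for some $\lambda>0$.
   Context: Let $n\ge 2$, $\zeta=2\pi/n$, $\mu\ge0$, $\phi_\alpha'(r)=-r^{-\alpha}$, and $s=2^{-\alpha}\sum_{j=1}^{n-1}\sin^{-(\alpha-1)}(j\zeta/2)$. The (rescaled) planar potential of a satellite attracted by $n$ unit masses at the vertices $e^{ij\zeta}$ of a regular polygon and a central mass $\mu$ at $0$ (identifying $\mathbb{R}^2=\mathbb{C}$) is $$V(u)=\frac12\|u\|^2+\sum_{j=1}^n\frac1{s+\mu}\phi_\alpha(\|u-e^{ij\zeta}\|)+\frac{\mu}{s+\mu}\phi_\alpha(\|u\|);$$ for $\mu=0$ the last term is absent. *)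

theory Defs
  imports "HOL-Analysis.Analysis"
begin

text \<open>A primitive of phi_alpha' r = - r^(-alpha) (additive constant irrelevant).\<close>
definition phi :: "real \<Rightarrow> real \<Rightarrow> real" where
  "phi \<alpha> r = (if \<alpha> = 1 then - ln r else r powr (1 - \<alpha>) / (\<alpha> - 1))"

definition zeta :: "nat \<Rightarrow> real" where
  "zeta n = 2 * pi / real n"

definition sconst :: "nat \<Rightarrow> real \<Rightarrow> real" where
  "sconst n \<alpha> = 2 powr (- \<alpha>) *
     (\<Sum>j = 1..n - 1. sin (real j * zeta n / 2) powr (- (\<alpha> - 1)))"

definition maxwellV :: "nat \<Rightarrow> real \<Rightarrow> real \<Rightarrow> complex \<Rightarrow> real" where
  "maxwellV n \<alpha> \<mu> u =
     1/2 * (norm u)\<^sup>2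
     + (\<Sum>j = 1..n. phi \<alpha> (norm (u - cis (real j * zeta n))) / (sconst n \<alpha> + \<mu>))
     + (if \<mu> = 0 then 0 else \<mu> / (sconst n \<alpha> + \<mu>) * phi \<alpha> (norm u))"

end

theory Submission
  imports Defs
begin

text \<open>
  With \<open>\<mu> = 0\<close> the gradient of \<open>V\<close> is \<open>u + s\<^sup>-\<^sup>1 \<Sum>\<^sub>j g(w\<^sub>j, u)\<close>, where \<open>w\<^sub>j\<close> are the
  \<open>n\<close>-th roots of unity and \<open>g(w, u) = -|u - w|\<^sup>-\<^sup>\<alpha>\<^sup>-\<^sup>1 (u - w)\<close> is the gradient of
  \<open>u \<mapsto> \<phi>\<^sub>\<alpha>(|u - w|)\<close>. At the origin \<open>g(w\<^sub>j, 0) = w\<^sub>j\<close>, and the roots of unity sum to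
  zero, so the origin is critical. The derivative of \<open>g(w, \<cdot>)\<close> at the origin is
  \<open>-I + (\<alpha> + 1) w w\<^sup>T\<close>; for \<open>n \<ge> 3\<close> also the squares \<open>w\<^sub>j\<^sup>2\<close> sum to zero, which gives
  \<open>\<Sum>\<^sub>j w\<^sub>j w\<^sub>j\<^sup>T = (n/2) I\<close>. Hence \<open>D\<^sup>2V(0) = (1 + (\<alpha> - 1) n / (2 s)) I\<close>, a positive
  multiple of the identity since \<open>s > 0\<close> and \<open>\<alpha> \<ge> 1\<close>.
\<close>

lemma phi_has_real_derivative:
  assumes "r > 0"
  shows "(phi \<alpha> has_real_derivative - (r powr - \<alpha>)) (at r)"
proof (cases "\<alpha> = 1")
  case True
  then have "phi \<alpha> = (\<lambda>r. - ln r)" by (auto simp: phi_def)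
  then show ?thesis using assms True
    by (auto intro!: derivative_eq_intros simp: powr_minus divide_simps)
next
  case False
  then have "phi \<alpha> = (\<lambda>r. r powr (1 - \<alpha>) / (\<alpha> - 1))" by (auto simp: phi_def)
  moreover have "(1 - \<alpha>) * r powr - \<alpha> / (\<alpha> - 1) = - (r powr - \<alpha>)"
    using False by (simp add: field_simps)
  ultimately show ?thesis
    using DERIV_cdivide[OF has_real_derivative_powr[OF assms, of "1 - \<alpha>"], of "\<alpha> - 1"] by simp
qed

definition phi_grad :: "real \<Rightarrow> 'a::real_inner \<Rightarrow> 'a \<Rightarrow> 'a" where
  "phi_grad \<alpha> w u = (- (norm (u - w) powr (- \<alpha> - 1))) *\<^sub>R (u - w)"

lemma norm_diff_has_derivative:
  fixes w :: "'a::real_inner"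
  assumes "u \<noteq> w"
  shows "((\<lambda>u. norm (u - w)) has_derivative (\<lambda>h. h \<bullet> sgn (u - w))) (at u)"
proof -
  have "((\<lambda>u. u - w) has_derivative (\<lambda>h. h)) (at u)" by (auto intro!: derivative_eq_intros)
  from has_derivative_compose[OF this has_derivative_norm] assms show ?thesis by simp
qed

lemma phi_dist_has_derivative:
  fixes w :: "'a::real_inner"
  assumes "u \<noteq> w"
  shows "((\<lambda>u. phi \<alpha> (norm (u - w))) has_derivative (\<lambda>h. phi_grad \<alpha> w u \<bullet> h)) (at u)"
proof -
  have r: "norm (u - w) > 0" using assms by simp
  have "((\<lambda>u. phi \<alpha> (norm (u - w))) has_derivative
      (\<lambda>h. - (norm (u - w) powr - \<alpha>) * (h \<bullet> sgn (u - w)))) (at u)"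
    using has_derivative_compose[OF norm_diff_has_derivative[OF assms]
        phi_has_real_derivative[OF r, unfolded has_field_derivative_def]]
    by simp
  moreover have "norm (u - w) powr (- \<alpha> - 1) = norm (u - w) powr - \<alpha> / norm (u - w)"
    using r by (simp add: powr_diff)
  then have "(\<lambda>h. - (norm (u - w) powr - \<alpha>) * (h \<bullet> sgn (u - w))) = (\<lambda>h. phi_grad \<alpha> w u \<bullet> h)"
    using r by (simp add: fun_eq_iff phi_grad_def sgn_div_norm inner_commute divide_simps)
  ultimately show ?thesis by simp
qed

lemma phi_grad_has_derivative:
  fixes w :: "'a::real_inner"
  assumes "u \<noteq> w"
  shows "(phi_grad \<alpha> w has_derivative
     (\<lambda>h. (- (norm (u - w) powr (- \<alpha> - 1))) *\<^sub>R h
        + ((\<alpha> + 1) * norm (u - w) powr (- \<alpha> - 3) * ((u - w) \<bullet> h)) *\<^sub>R (u - w))) (at u)"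
proof -
  have r: "norm (u - w) > 0" using assms by simp
  have chain: "((\<lambda>u. norm (u - w) powr (- \<alpha> - 1)) has_derivative
      (\<lambda>h. (- \<alpha> - 1) * norm (u - w) powr (- \<alpha> - 1 - 1) * (h \<bullet> sgn (u - w)))) (at u)"
    using has_derivative_compose[OF norm_diff_has_derivative[OF assms]
        has_real_derivative_powr[OF r, of "- \<alpha> - 1", unfolded has_field_derivative_def]]
    by (simp add: mult_ac)
  have "norm (u - w) powr (- \<alpha> - 1 - 1) = norm (u - w) powr (- \<alpha> - 3) * norm (u - w)"
    using r powr_add[of "norm (u - w)" "- \<alpha> - 3" 1] by simp
  then have "((\<lambda>u. norm (u - w) powr (- \<alpha> - 1)) has_derivative
      (\<lambda>h. (- \<alpha> - 1) * norm (u - w) powr (- \<alpha> - 3) * ((u - w) \<bullet> h))) (at u)"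
    using r by (intro has_derivative_eq_rhs[OF chain]) (simp add: fun_eq_iff sgn_div_norm inner_commute)
  from has_derivative_scaleR[OF has_derivative_minus[OF this]
      has_derivative_diff[OF has_derivative_ident has_derivative_const[of w]]]
  show ?thesis unfolding phi_grad_def
    by (rule has_derivative_eq_rhs) (simp add: fun_eq_iff algebra_simps)
qed

lemma phi_grad_at_origin: "norm w = 1 \<Longrightarrow> phi_grad \<alpha> w 0 = w"
  by (simp add: phi_grad_def)

lemma phi_grad_has_derivative_at_origin:
  assumes "norm w = 1"
  shows "(phi_grad \<alpha> w has_derivative (\<lambda>h. - h + ((\<alpha> + 1) * (w \<bullet> h)) *\<^sub>R w)) (at 0)"
proof -
  have "0 \<noteq> w" using assms by auto
  from phi_grad_has_derivative[OF this, of \<alpha>] show ?thesis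
    by (rule has_derivative_eq_rhs) (simp add: fun_eq_iff assms)
qed

lemma cis_neq_1:
  assumes "0 < x" "x < 2 * pi"
  shows "cis x \<noteq> 1"
proof
  assume "cis x = 1"
  then have "cos x = 1" by (simp add: complex_eq_iff)
  moreover have "sin (x / 2) > 0" using assms by (intro sin_gt_zero) auto
  moreover have "cos x = 1 - 2 * sin (x / 2) ^ 2" using cos_double_sin[of "x / 2"] by simp
  ultimately show False by simp
qed

lemma sum_roots_of_unity_power:
  assumes "1 \<le> k" "k < n"
  shows "(\<Sum>j = 1..n. cis (real j * zeta n) ^ k) = 0"
proof -
  define z where "z = cis (real k * zeta n)"
  have n: "real n > 0" using assms by simp
  have powers: "cis (real j * zeta n) ^ k = z ^ j" for j
    unfolding z_def by (simp only: Complex.DeMoivre) (simp add: mult_ac)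
  have "z ^ n = cis (real k * (2 * pi))"
    using n by (simp add: z_def Complex.DeMoivre zeta_def)
  also have "\<dots> = 1" by (simp add: Complex.DeMoivre[symmetric])
  finally have zn: "z ^ n = 1" .
  have "real k / real n < 1" using assms by simp
  then have "z \<noteq> 1"
    unfolding z_def using assms n by (intro cis_neq_1) (auto simp: zeta_def field_simps)
  then have "(\<Sum>j = 1..n. z ^ j) = (z - z ^ Suc n) / (1 - z)"
    using assms by (subst sum_gp) auto
  then show ?thesis using zn by (simp add: powers)
qed

lemma sconst_pos:
  assumes "n \<ge> 2"
  shows "sconst n \<alpha> > 0"
proof -
  have "sin (real j * zeta n / 2) > 0" if "j \<in> {1..n - 1}" for j
  proof (rule sin_gt_zero)
    show "0 < real j * zeta n / 2" using that assms by (simp add: zeta_def)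
    have "real j / real n < 1" using that assms by auto
    then show "real j * zeta n / 2 < pi" using assms by (simp add: zeta_def field_simps)
  qed
  then have "(\<Sum>j = 1..n - 1. sin (real j * zeta n / 2) powr (- (\<alpha> - 1))) > 0"
    using assms by (intro sum_pos) force+
  then show ?thesis unfolding sconst_def by simp
qed

text \<open>Via conjugation, sums of the rank-one maps \<open>h \<mapsto> (w \<bullet> h) w\<close> reduce to power sums of the \<open>w\<close>.\<close>

lemma inner_scaleR_cis:
  "(cis t \<bullet> h) *\<^sub>R cis t = (1 / 2) *\<^sub>R h + (1 / 2) *\<^sub>R (cis t ^ 2 * cnj h)"
proof -
  have sin_sq: "sin t * sin t = 1 - cos t * cos t"
    using sin_cos_squared_add[of t] by (simp add: power2_eq_square)
  show ?thesis
    by (simp add: complex_eq_iff inner_complex_def Complex.DeMoivre cos_double sin_double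
        algebra_simps power2_eq_square sin_sq)
qed

lemma sum_inner_scaleR_roots_of_unity:
  assumes "n \<ge> 3"
  shows "(\<Sum>j = 1..n. (cis (real j * zeta n) \<bullet> h) *\<^sub>R cis (real j * zeta n)) = (real n / 2) *\<^sub>R h"
proof -
  have "(\<Sum>j = 1..n. (cis (real j * zeta n) \<bullet> h) *\<^sub>R cis (real j * zeta n))
     = of_nat n * ((1 / 2) *\<^sub>R h)
       + (1 / 2) *\<^sub>R ((\<Sum>j = 1..n. cis (real j * zeta n) ^ 2) * cnj h)"
    by (simp add: inner_scaleR_cis sum.distrib scaleR_sum_right sum_distrib_right)
  also have "(\<Sum>j = 1..n. cis (real j * zeta n) ^ 2) = 0"
    using assms by (intro sum_roots_of_unity_power) auto
  finally show ?thesis by (simp add: complex_eq_iff)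
qed

definition maxwell_grad :: "nat \<Rightarrow> real \<Rightarrow> complex \<Rightarrow> complex" where
  "maxwell_grad n \<alpha> u =
     u + (1 / sconst n \<alpha>) *\<^sub>R (\<Sum>j = 1..n. phi_grad \<alpha> (cis (real j * zeta n)) u)"

lemma maxwellV_has_derivative:
  assumes "norm u < 1"
  shows "(maxwellV n \<alpha> 0 has_derivative (\<lambda>h. maxwell_grad n \<alpha> u \<bullet> h)) (at u)"
proof -
  have V: "maxwellV n \<alpha> 0 = (\<lambda>u. 1 / 2 * (norm u)\<^sup>2
      + 1 / sconst n \<alpha> * (\<Sum>j = 1..n. phi \<alpha> (norm (u - cis (real j * zeta n)))))"
    by (simp add: maxwellV_def fun_eq_iff sum_divide_distrib)
  have "((\<lambda>u. 1 / 2 * (norm u)\<^sup>2) has_derivative (\<lambda>h. u \<bullet> h)) (at u)"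
    unfolding power2_norm_eq_inner
    by (rule has_derivative_eq_rhs) (auto intro!: derivative_eq_intros simp: inner_commute)
  moreover have "u \<noteq> cis (real j * zeta n)" for j using assms by auto
  then have "((\<lambda>u. \<Sum>j = 1..n. phi \<alpha> (norm (u - cis (real j * zeta n)))) has_derivative
      (\<lambda>h. \<Sum>j = 1..n. phi_grad \<alpha> (cis (real j * zeta n)) u \<bullet> h)) (at u)"
    by (intro has_derivative_sum phi_dist_has_derivative)
  ultimately show ?thesis unfolding V
    by (rule has_derivative_eq_rhs[OF has_derivative_add[OF _ has_derivative_mult_right]])
       (simp add: maxwell_grad_def fun_eq_iff inner_add_left inner_sum_left)
qed

lemma maxwell_grad_at_origin:
  assumes "n \<ge> 2"
  shows "maxwell_grad n \<alpha> 0 = 0"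
  using sum_roots_of_unity_power[of 1 n] assms
  by (simp add: maxwell_grad_def phi_grad_at_origin)

lemma maxwell_grad_has_derivative_at_origin:
  assumes "n \<ge> 3"
  shows "(maxwell_grad n \<alpha> has_derivative
     (\<lambda>h. (1 + (\<alpha> - 1) * real n / (2 * sconst n \<alpha>)) *\<^sub>R h)) (at 0)"
proof -
  define s where "s = sconst n \<alpha>"
  define w where "w j = cis (real j * zeta n)" for j
  have "s > 0" using sconst_pos[of n \<alpha>] assms by (simp add: s_def)
  have "(phi_grad \<alpha> (w j) has_derivative (\<lambda>h. - h + ((\<alpha> + 1) * (w j \<bullet> h)) *\<^sub>R w j)) (at 0)"
    for j by (rule phi_grad_has_derivative_at_origin) (simp add: w_def)
  then have "((\<lambda>u. \<Sum>j = 1..n. phi_grad \<alpha> (w j) u) has_derivative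
      (\<lambda>h. \<Sum>j = 1..n. - h + ((\<alpha> + 1) * (w j \<bullet> h)) *\<^sub>R w j)) (at 0)"
    by (rule has_derivative_sum)
  from has_derivative_add[OF has_derivative_ident has_derivative_scaleR_right[OF this, of "1 / s"]]
  have "(maxwell_grad n \<alpha> has_derivative
      (\<lambda>h. h + (1 / s) *\<^sub>R (\<Sum>j = 1..n. - h + ((\<alpha> + 1) * (w j \<bullet> h)) *\<^sub>R w j))) (at 0)"
    by (simp only: maxwell_grad_def[abs_def] s_def w_def)
  moreover have "h + (1 / s) *\<^sub>R (\<Sum>j = 1..n. - h + ((\<alpha> + 1) * (w j \<bullet> h)) *\<^sub>R w j)
      = (1 + (\<alpha> - 1) * real n / (2 * s)) *\<^sub>R h" for h
  proof -
    have "(\<Sum>j = 1..n. - h + ((\<alpha> + 1) * (w j \<bullet> h)) *\<^sub>R w j)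
        = - (of_nat n * h) + (\<alpha> + 1) *\<^sub>R (\<Sum>j = 1..n. (w j \<bullet> h) *\<^sub>R w j)"
      by (simp add: sum.distrib scaleR_sum_right sum_subtractf)
    also have "(\<Sum>j = 1..n. (w j \<bullet> h) *\<^sub>R w j) = (real n / 2) *\<^sub>R h"
      unfolding w_def using sum_inner_scaleR_roots_of_unity[OF assms] .
    finally have sum_eq: "(\<Sum>j = 1..n. - h + ((\<alpha> + 1) * (w j \<bullet> h)) *\<^sub>R w j)
        = - (of_nat n * h) + (\<alpha> + 1) *\<^sub>R ((real n / 2) *\<^sub>R h)" .
    show ?thesis unfolding sum_eq using \<open>s > 0\<close> by (simp add: complex_eq_iff field_simps)
  qed
  ultimately show ?thesis by (simp add: s_def)
qed

theorem mainTheorem7: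
  fixes n :: nat and \<alpha> :: real
  assumes "n \<ge> 2" and "\<alpha> \<ge> 1"
  shows "(maxwellV n \<alpha> 0 has_derivative (\<lambda>h. 0)) (at 0)
    \<and> (n \<ge> 3 \<longrightarrow>
        (\<exists>G :: complex \<Rightarrow> complex. \<exists>c :: real. c > 0 \<and>
           (\<forall>\<^sub>F u in nhds 0. (maxwellV n \<alpha> 0 has_derivative (\<lambda>h. G u \<bullet> h)) (at u)) \<and>
           (G has_derivative (\<lambda>h. c *\<^sub>R h)) (at 0)))"
proof (intro conjI impI)
  show "(maxwellV n \<alpha> 0 has_derivative (\<lambda>h. 0)) (at 0)"
    using maxwellV_has_derivative[of 0 n \<alpha>] maxwell_grad_at_origin[OF assms(1)] by simp
  assume "n \<ge> 3"
  define c where "c = 1 + (\<alpha> - 1) * real n / (2 * sconst n \<alpha>)"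
  have "c > 0"
    using sconst_pos[OF assms(1), of \<alpha>] assms(2) unfolding c_def
    by (simp add: add_pos_nonneg)
  moreover have "\<forall>\<^sub>F u in nhds 0. (maxwellV n \<alpha> 0 has_derivative (\<lambda>h. maxwell_grad n \<alpha> u \<bullet> h)) (at u)"
    using eventually_nhds_in_open[of "ball 0 1" 0]
    by (rule eventually_mono) (auto intro: maxwellV_has_derivative)
  ultimately show "\<exists>G c. c > 0 \<and>
      (\<forall>\<^sub>F u in nhds 0. (maxwellV n \<alpha> 0 has_derivative (\<lambda>h. G u \<bullet> h)) (at u)) \<and>
      (G has_derivative (\<lambda>h. c *\<^sub>R h)) (at 0)"
    using maxwell_grad_has_derivative_at_origin[OF \<open>n \<ge> 3\<close>, of \<alpha>] unfolding c_def by blast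
qed

end
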